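(* For every integer $p\ge 0$, the edge set of $K_{4p+3,4p+3,4p+3}\times K_2$ can be partitioned into $2p+2$ planar subgraphs; in particular $\theta(K_{4p+3,4p+3,4p+3}\times K_2)\le 2p+2$.
   Context: The thickness $\theta(G)$ of a graph $G$ is the minimum number of planar subgraphs whose union is $G$. The Kronecker product $G\times H$ of graphs $G$ and $H$ is the graph with vertex set $V(G)\times V(H)$ in which $(g,h)$ and $(g',h')$ are adjacent if and only if $gg'\in E(G)$ and $hh'\in E(H)$. $K_{n,n,n}$ denotes the complete tripartite graph with three parts of size $n$. *)

theory Defs
  imports "HOL-Analysis.Analysis"
begin

definition graph :: "'a set \<Rightarrow> 'a set set \<Rightarrow> bool" where
  "graph V E \<longleftrightarrow> finite V \<and> (\<forall>e\<in>E. e \<subseteq> V \<and> card e = 2)"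

definition planar :: "'a set \<Rightarrow> 'a set set \<Rightarrow> bool" where
  "planar V E \<longleftrightarrow>
     (\<exists>(pos :: 'a \<Rightarrow> complex) (\<gamma> :: 'a set \<Rightarrow> real \<Rightarrow> complex).
        inj_on pos V \<and>
        (\<forall>e\<in>E. arc (\<gamma> e) \<and> {pathstart (\<gamma> e), pathfinish (\<gamma> e)} = pos ` e \<and>
                 path_image (\<gamma> e) \<inter> pos ` V = pos ` e) \<and>
        (\<forall>e\<in>E. \<forall>e'\<in>E. e \<noteq> e' \<longrightarrow>
                 path_image (\<gamma> e) \<inter> path_image (\<gamma> e') \<subseteq> pos ` (e \<inter> e')))"

definition planar_partition :: "'a set \<Rightarrow> 'a set set \<Rightarrow> nat \<Rightarrow> bool" where
  "planar_partition V E k \<longleftrightarrow>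
     (\<exists>f :: 'a set \<Rightarrow> nat. (\<forall>e\<in>E. f e < k) \<and>
        (\<forall>i<k. planar V {e\<in>E. f e = i}))"

definition thickness :: "'a set \<Rightarrow> 'a set set \<Rightarrow> nat" where
  "thickness V E = (LEAST k. planar_partition V E k)"

definition Knnn_V :: "nat \<Rightarrow> (nat \<times> nat) set" where
  "Knnn_V n = {0..<3} \<times> {0..<n}"

definition Knnn_E :: "nat \<Rightarrow> (nat \<times> nat) set set" where
  "Knnn_E n = {{u, v} | u v. u \<in> Knnn_V n \<and> v \<in> Knnn_V n \<and> fst u \<noteq> fst v}"

definition K2_V :: "nat set" where "K2_V = {0, 1}"
definition K2_E :: "nat set set" where "K2_E = {{0, 1}}"

definition kron_V :: "'a set \<Rightarrow> 'b set \<Rightarrow> ('a \<times> 'b) set" where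
  "kron_V V W = V \<times> W"

definition kron_E :: "'a set set \<Rightarrow> 'b set set \<Rightarrow> ('a \<times> 'b) set set" where
  "kron_E E F = {{(g, h), (g', h')} | g g' h h'. {g, g'} \<in> E \<and> {h, h'} \<in> F}"

end

theory Submission
  imports Defs
begin

text \<open>Split the edges {((X, j), 0), ((Y, k), 1)} of K_{n,n,n} \<times> K_2 into n div 2 + 1 classes
  according to t = ((k - j) mod (n + 1)) div 2.  Class t is drawn on concentric circles: the vertex
  ((X, j), 0) lies on layer 2j + 1, the vertex ((Y, k), 1) on layer 2((k - 2t) mod (n + 1)), and a
  vertex ((X, _), _) on layer L sits at angle (2X + 3L) \<cdot> 60\<degree>.  Then every edge of class t
  joins consecutive layers with an angular offset of \<plusminus>60\<degree>, while vertices on a common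
  layer are multiples of 120\<degree> apart.  Drawing each edge as the spiral along which radius and
  angle change linearly, two spirals can only meet in an interior point if they leave the same vertex
  in the same direction, i.e. if they are the same edge.\<close>

lemma rcis_eq_rcis_iff:
  assumes "r > 0" "r' > 0"
  shows "rcis r a = rcis r' b \<longleftrightarrow> r = r' \<and> (\<exists>k::int. a = b + 2 * pi * k)"
proof
  assume eq: "rcis r a = rcis r' b"
  then have "r = r'"
    using assms by (metis abs_of_pos complex_mod_rcis)
  with eq assms have "cos a = cos b \<and> sin a = sin b"
    by (metis Im_rcis Re_rcis mult_cancel_left less_irrefl)
  with \<open>r = r'\<close> show "r = r' \<and> (\<exists>k::int. a = b + 2 * pi * k)"
    using sin_cos_eq_iff by blast
next
  assume "r = r' \<and> (\<exists>k::int. a = b + 2 * pi * k)"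
  then show "rcis r a = rcis r' b"
    by (metis complex_eq_iff Im_rcis Re_rcis sin_cos_eq_iff)
qed

definition rcis6 :: "real \<Rightarrow> real \<Rightarrow> complex" where
  "rcis6 r a = rcis r (pi / 3 * a)"

lemma norm_rcis6 [simp]: "norm (rcis6 r a) = \<bar>r\<bar>"
  by (simp add: rcis6_def)

lemma rcis6_eq_rcis6_iff:
  assumes "r > 0" "r' > 0"
  shows "rcis6 r a = rcis6 r' b \<longleftrightarrow> r = r' \<and> (\<exists>k::int. a = b + 6 * k)"
proof -
  have "pi / 3 * a = pi / 3 * b + 2 * pi * k \<longleftrightarrow> a = b + 6 * k" for k :: real
  proof -
    have "pi / 3 * a = pi / 3 * b + 2 * pi * k \<longleftrightarrow> pi / 3 * a = pi / 3 * (b + 6 * k)"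
      by (simp add: algebra_simps)
    also have "\<dots> \<longleftrightarrow> a = b + 6 * k"
      by simp
    finally show ?thesis .
  qed
  then show ?thesis
    using assms by (simp add: rcis6_def rcis_eq_rcis_iff)
qed

lemma rcis6_of_int_eq_iff:
  assumes "r > 0" "r' > 0"
  shows "rcis6 r (of_int a) = rcis6 r' (of_int b) \<longleftrightarrow> r = r' \<and> a mod 6 = b mod 6"
proof -
  have "real_of_int a = of_int b + 6 * of_int k \<longleftrightarrow> a = b + 6 * k" for k
    by (metis of_int_eq_iff of_int_add of_int_mult of_int_numeral)
  then have "rcis6 r (of_int a) = rcis6 r' (of_int b) \<longleftrightarrow> r = r' \<and> (\<exists>k. a = b + 6 * k)"
    using assms by (simp only: rcis6_eq_rcis6_iff)
  also have "(\<exists>k. a = b + 6 * k) \<longleftrightarrow> a mod 6 = b mod 6"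
    by (auto simp: mod_eq_dvd_iff dvd_def algebra_simps)
  finally show ?thesis .
qed

definition spiral :: "real \<Rightarrow> real \<Rightarrow> real \<Rightarrow> real \<Rightarrow> complex" where
  "spiral r a d t = rcis6 (r + t) (a + t * d)"

lemma norm_spiral: "0 \<le> r + t \<Longrightarrow> norm (spiral r a d t) = r + t"
  by (simp add: spiral_def)

lemma arc_spiral:
  assumes "0 \<le> r"
  shows "arc (spiral r a d)"
  unfolding arc_def path_def
proof
  show "continuous_on {0..1} (spiral r a d)"
    unfolding spiral_def rcis6_def by (intro continuous_on_rcis continuous_intros)
  show "inj_on (spiral r a d) {0..1}"
  proof (rule inj_onI)
    fix s t assume s: "s \<in> {0..1}" and t: "t \<in> {0..1}" and eq: "spiral r a d s = spiral r a d t"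
    have "r + s = norm (spiral r a d s)"
      using assms s by (intro norm_spiral[symmetric]) simp
    also have "\<dots> = norm (spiral r a d t)"
      by (simp only: eq)
    also have "\<dots> = r + t"
      using assms t by (intro norm_spiral) simp
    finally show "s = t"
      by simp
  qed
qed

lemma spiral_eq_layerD:
  assumes eq: "spiral (real (Suc l)) a d s = spiral (real (Suc l')) a' d' s'"
    and "s \<in> {0..<1}" "s' \<in> {0..<1}"
  shows "l = l' \<and> s = s'"
proof -
  have "norm (spiral (real (Suc l)) a d s) = real (Suc l) + s"
    "norm (spiral (real (Suc l')) a' d' s') = real (Suc l') + s'"
    using assms(2,3) by (simp_all del: of_nat_Suc add: norm_spiral)
  with eq have *: "real (Suc l) + s = real (Suc l') + s'"
    by simp
  then have "l = l'"
    using assms by (cases l l' rule: linorder_cases) auto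
  with * show ?thesis
    by simp
qed

lemma spiral_eq_same_radiusD:
  fixes a a' d d' :: int
  assumes eq: "spiral r (of_int a) (of_int d) s = spiral r (of_int a') (of_int d') s"
    and "r > 0" "0 < s" "s < 1" "d \<in> {1, -1}" "d' \<in> {1, -1}" "even (a - a')"
  shows "d = d' \<and> a mod 6 = a' mod 6"
proof -
  obtain k :: int where k: "of_int a + s * of_int d = of_int a' + s * of_int d' + 6 * of_int k"
    using eq assms(2,3) by (auto simp: spiral_def rcis6_eq_rcis6_iff)
  show ?thesis
  proof (cases "d = d'")
    case True
    with k have "real_of_int a = of_int (a' + 6 * k)"
      by simp
    then have "a = a' + 6 * k"
      by (simp only: of_int_eq_iff)
    with True show ?thesis
      by simp
  next
    case False
    \<comment> \<open>opposite directions would make the angular gap 2s an even integer\<close>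
    have "even (a - a' - 6 * k)"
      using \<open>even (a - a')\<close> by simp
    then obtain m where m: "a - a' - 6 * k = 2 * m" ..
    from k have "real_of_int (a - a' - 6 * k) = s * (of_int d' - of_int d)"
      by (simp add: algebra_simps)
    with m False assms(3,5,6) have "\<bar>real_of_int m\<bar> = s"
      by auto
    then have "0 < \<bar>m\<bar>" "\<bar>m\<bar> < 1"
      using assms(3,4) by linarith+
    then show ?thesis
      by simp
  qed
qed

locale concentric_layering =
  fixes V :: "'a set" and E :: "'a set set" and lay :: "'a \<Rightarrow> nat" and ang :: "'a \<Rightarrow> int"
  assumes inj_lay_ang: "inj_on (\<lambda>v. (lay v, ang v mod 6)) V"
    and same_layer_even: "\<And>u v. u \<in> V \<Longrightarrow> v \<in> V \<Longrightarrow> lay u = lay v \<Longrightarrow> even (ang u - ang v)"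
    and edge_layered: "\<And>e. e \<in> E \<Longrightarrow> \<exists>u v. e = {u, v} \<and> u \<in> V \<and> v \<in> V
          \<and> lay v = Suc (lay u) \<and> (ang v - ang u) mod 6 \<in> {1, 5}"
begin

definition ends :: "'a set \<Rightarrow> 'a \<times> 'a" where
  "ends e = (SOME (u, v). e = {u, v} \<and> u \<in> V \<and> v \<in> V
          \<and> lay v = Suc (lay u) \<and> (ang v - ang u) mod 6 \<in> {1, 5})"

abbreviation lower :: "'a set \<Rightarrow> 'a" where "lower e \<equiv> fst (ends e)"
abbreviation upper :: "'a set \<Rightarrow> 'a" where "upper e \<equiv> snd (ends e)"

lemma edge_lower_upper:
  assumes "e \<in> E"
  shows "e = {lower e, upper e}" "lower e \<in> V" "upper e \<in> V" "lay (upper e) = Suc (lay (lower e))"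
    and "(ang (upper e) - ang (lower e)) mod 6 \<in> {1, 5}"
proof -
  have "case ends e of (u, v) \<Rightarrow> e = {u, v} \<and> u \<in> V \<and> v \<in> V
          \<and> lay v = Suc (lay u) \<and> (ang v - ang u) mod 6 \<in> {1, 5}"
    unfolding ends_def by (rule someI_ex) (use edge_layered[OF assms] in auto)
  then show "e = {lower e, upper e}" "lower e \<in> V" "upper e \<in> V"
    "lay (upper e) = Suc (lay (lower e))" "(ang (upper e) - ang (lower e)) mod 6 \<in> {1, 5}"
    by (simp_all add: case_prod_beta)
qed

definition step :: "'a set \<Rightarrow> int" where
  "step e = (if (ang (upper e) - ang (lower e)) mod 6 = 1 then 1 else -1)"

lemma step_cases: "step e \<in> {1, -1}"
  by (simp add: step_def)

lemma ang_upper_mod: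
  assumes "e \<in> E"
  shows "ang (upper e) mod 6 = (ang (lower e) + step e) mod 6"
proof -
  have diff: "(ang (upper e) - ang (lower e)) mod 6 = step e mod 6"
    using edge_lower_upper(5)[OF assms] by (auto simp: step_def)
  have "ang (upper e) mod 6 = (ang (lower e) + (ang (upper e) - ang (lower e))) mod 6"
    by simp
  also have "\<dots> = (ang (lower e) + (ang (upper e) - ang (lower e)) mod 6) mod 6"
    by (rule mod_add_right_eq[symmetric])
  also have "\<dots> = (ang (lower e) + step e) mod 6"
    unfolding diff by (rule mod_add_right_eq)
  finally show ?thesis .
qed

definition vertex_point :: "'a \<Rightarrow> complex" where
  "vertex_point v = rcis6 (real (Suc (lay v))) (of_int (ang v))"

definition edge_arc :: "'a set \<Rightarrow> real \<Rightarrow> complex" where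
  "edge_arc e = spiral (real (Suc (lay (lower e)))) (of_int (ang (lower e))) (of_int (step e))"

lemma inj_on_vertex_point: "inj_on vertex_point V"
  using inj_lay_ang by (auto simp: inj_on_def vertex_point_def rcis6_of_int_eq_iff)

lemma edge_arc_0: "edge_arc e 0 = vertex_point (lower e)"
  by (simp add: edge_arc_def vertex_point_def spiral_def)

lemma edge_arc_1:
  assumes "e \<in> E"
  shows "edge_arc e 1 = vertex_point (upper e)"
proof -
  have "edge_arc e 1 = rcis6 (real (Suc (Suc (lay (lower e))))) (of_int (ang (lower e) + step e))"
    by (simp add: edge_arc_def spiral_def add.commute)
  also have "\<dots> = vertex_point (upper e)"
    using edge_lower_upper(4)[OF assms] ang_upper_mod[OF assms]
    by (simp add: vertex_point_def rcis6_of_int_eq_iff flip: of_int_add)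
  finally show ?thesis .
qed

lemma vertex_point_image_edge:
  assumes "e \<in> E"
  shows "vertex_point ` e = {vertex_point (lower e), vertex_point (upper e)}"
proof -
  have "vertex_point ` e = vertex_point ` {lower e, upper e}"
    using edge_lower_upper(1)[OF assms] by (rule arg_cong)
  then show ?thesis
    by simp
qed

lemma arc_edge_arc: "arc (edge_arc e)"
  unfolding edge_arc_def by (rule arc_spiral) simp

lemma edge_arc_endpoints:
  "e \<in> E \<Longrightarrow> {pathstart (edge_arc e), pathfinish (edge_arc e)} = vertex_point ` e"
  by (simp add: pathstart_def pathfinish_def edge_arc_0 edge_arc_1 vertex_point_image_edge)

lemma edge_arc_at_vertex:
  assumes "t \<in> {0..1}" "edge_arc e t \<in> vertex_point ` V"
  shows "t = 0 \<or> t = 1"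
proof -
  obtain w where w: "edge_arc e t = vertex_point w"
    using assms(2) by blast
  have "norm (edge_arc e t) = real (Suc (lay (lower e))) + t"
    using assms(1) by (simp del: of_nat_Suc add: edge_arc_def norm_spiral)
  moreover have "norm (vertex_point w) = real (Suc (lay w))"
    by (simp del: of_nat_Suc add: vertex_point_def)
  ultimately have eq: "real (lay (lower e)) + t = real (lay w)"
    using w by simp
  have "0 \<le> t" "t \<le> 1"
    using assms(1) by auto
  show ?thesis
  proof (cases "lay w \<le> lay (lower e)")
    case True
    then have "real (lay w) \<le> real (lay (lower e))"
      by simp
    with eq \<open>0 \<le> t\<close> show ?thesis
      by linarith
  next
    case False
    then have "real (lay (lower e)) + 1 \<le> real (lay w)"
      by simp
    with eq \<open>t \<le> 1\<close> show ?thesis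
      by linarith
  qed
qed

lemma edge_subset_vertices:
  assumes "e \<in> E"
  shows "e \<subseteq> V"
proof -
  have "{lower e, upper e} \<subseteq> V"
    using edge_lower_upper(2,3)[OF assms] by simp
  with edge_lower_upper(1)[OF assms, symmetric] show ?thesis
    by (rule subst)
qed

lemma path_image_edge_arc_Int_vertices:
  assumes "e \<in> E"
  shows "path_image (edge_arc e) \<inter> vertex_point ` V = vertex_point ` e"
proof
  have "vertex_point ` e \<subseteq> path_image (edge_arc e)"
    unfolding edge_arc_endpoints[OF assms, symmetric]
    by (simp add: pathstart_in_path_image pathfinish_in_path_image)
  moreover have "vertex_point ` e \<subseteq> vertex_point ` V"
    using edge_subset_vertices[OF assms] by (rule image_mono)
  ultimately show "vertex_point ` e \<subseteq> path_image (edge_arc e) \<inter> vertex_point ` V"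
    by (rule Int_greatest)
  show "path_image (edge_arc e) \<inter> vertex_point ` V \<subseteq> vertex_point ` e"
  proof
    fix z assume z: "z \<in> path_image (edge_arc e) \<inter> vertex_point ` V"
    then obtain t where t: "t \<in> {0..1}" "z = edge_arc e t"
      by (auto simp: path_image_def)
    with z have "edge_arc e t \<in> vertex_point ` V"
      by simp
    with t(1) have "t = 0 \<or> t = 1"
      by (rule edge_arc_at_vertex)
    with t show "z \<in> vertex_point ` e"
      using edge_arc_0 edge_arc_1[OF assms] vertex_point_image_edge[OF assms] by auto
  qed
qed

lemma edge_arc_interior_eq:
  assumes "e \<in> E" "e' \<in> E" "s \<in> {0<..<1}" "s' \<in> {0<..<1}" and eq: "edge_arc e s = edge_arc e' s'"
  shows "e = e'"
proof -
  have lay: "lay (lower e) = lay (lower e')" and "s = s'"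
    using spiral_eq_layerD[OF eq[unfolded edge_arc_def]] assms(3,4) by auto
  moreover have "even (ang (lower e) - ang (lower e'))"
    using same_layer_even edge_lower_upper(2) assms(1,2) lay by blast
  ultimately have "step e = step e'" and ang: "ang (lower e) mod 6 = ang (lower e') mod 6"
    using spiral_eq_same_radiusD[of "real (Suc (lay (lower e)))"] eq assms(3) step_cases
    by (auto simp: edge_arc_def)
  have lower: "lower e = lower e'"
    using inj_onD[OF inj_lay_ang] lay ang edge_lower_upper(2) assms(1,2) by simp
  have "upper e = upper e'"
    using inj_onD[OF inj_lay_ang] edge_lower_upper(3,4) ang_upper_mod assms(1,2) lower
      \<open>step e = step e'\<close> by simp
  have "e = {lower e, upper e}"
    by (rule edge_lower_upper(1)[OF assms(1)])
  also have "\<dots> = {lower e', upper e'}"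
    using lower \<open>upper e = upper e'\<close> by simp
  also have "\<dots> = e'"
    by (rule edge_lower_upper(1)[OF assms(2), symmetric])
  finally show ?thesis .
qed

lemma edge_arc_endpoint_in_vertices:
  assumes "e \<in> E" "t = 0 \<or> t = 1"
  shows "edge_arc e t \<in> vertex_point ` V"
  using assms(2)
proof
  assume "t = 0"
  then show ?thesis
    using edge_lower_upper(2)[OF assms(1)] by (simp add: edge_arc_0)
next
  assume "t = 1"
  then show ?thesis
    using edge_lower_upper(3)[OF assms(1)] by (simp add: edge_arc_1[OF assms(1)])
qed

lemma path_image_edge_arc_Int:
  assumes "e \<in> E" "e' \<in> E" "e \<noteq> e'"
  shows "path_image (edge_arc e) \<inter> path_image (edge_arc e') \<subseteq> vertex_point ` (e \<inter> e')"
proof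
  fix z assume z: "z \<in> path_image (edge_arc e) \<inter> path_image (edge_arc e')"
  show "z \<in> vertex_point ` (e \<inter> e')"
  proof (cases "z \<in> vertex_point ` V")
    case True
    with z have "z \<in> vertex_point ` e \<inter> vertex_point ` e'"
      using path_image_edge_arc_Int_vertices assms(1,2) by blast
    then show ?thesis
      using inj_on_image_Int[OF inj_on_vertex_point edge_subset_vertices edge_subset_vertices] assms(1,2)
      by simp
  next
    case False
    obtain s s' where s: "s \<in> {0..1}" "edge_arc e s = z" and s': "s' \<in> {0..1}" "edge_arc e' s' = z"
      using z by (auto simp: path_image_def)
    have "s \<in> {0<..<1}"
      using s False edge_arc_endpoint_in_vertices[OF assms(1), of s] by force
    moreover have "s' \<in> {0<..<1}"
      using s' False edge_arc_endpoint_in_vertices[OF assms(2), of s'] by force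
    ultimately have "e = e'"
      using edge_arc_interior_eq[OF assms(1,2)] s(2) s'(2) by simp
    with assms(3) show ?thesis ..
  qed
qed

theorem planar: "planar V E"
  unfolding planar_def
proof (intro exI conjI ballI impI)
  show "inj_on vertex_point V"
    by (rule inj_on_vertex_point)
  fix e assume e: "e \<in> E"
  show "arc (edge_arc e)"
    by (rule arc_edge_arc)
  show "{pathstart (edge_arc e), pathfinish (edge_arc e)} = vertex_point ` e"
    using e by (rule edge_arc_endpoints)
  show "path_image (edge_arc e) \<inter> vertex_point ` V = vertex_point ` e"
    using e by (rule path_image_edge_arc_Int_vertices)
  fix e' assume "e' \<in> E" "e \<noteq> e'"
  with e show "path_image (edge_arc e) \<inter> path_image (edge_arc e') \<subseteq> vertex_point ` (e \<inter> e')"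
    by (rule path_image_edge_arc_Int)
qed

end

lemma kron_Knnn_K2_edgeE:
  assumes "e \<in> kron_E (Knnn_E n) K2_E"
  obtains X Y j k where "X < 3" "Y < 3" "X \<noteq> Y" "j < n" "k < n"
    and "e = {((X, j), 0), ((Y, k), 1)}"
proof -
  obtain g g' h h' where e: "e = {(g, h), (g', h')}" and gg: "{g, g'} \<in> Knnn_E n"
    and hh: "{h, h'} \<in> K2_E"
    using assms unfolding kron_E_def by blast
  obtain X j Y k where g: "g = (X, j)" "g' = (Y, k)"
    by fastforce
  from gg have range: "X < 3" "Y < 3" "X \<noteq> Y" "j < n" "k < n"
    unfolding Knnn_E_def Knnn_V_def g by (auto simp: doubleton_eq_iff)
  from hh have "h = 0 \<and> h' = 1 \<or> h = 1 \<and> h' = 0"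
    unfolding K2_E_def by (auto simp: doubleton_eq_iff)
  then show ?thesis
  proof
    assume "h = 0 \<and> h' = 1"
    then have "e = {((X, j), 0), ((Y, k), 1)}"
      by (simp add: e g)
    with range show ?thesis
      by (intro that)
  next
    assume "h = 1 \<and> h' = 0"
    then have "e = {((Y, k), 0), ((X, j), 1)}"
      by (simp add: e g insert_commute)
    with range show ?thesis
      by (intro that) auto
  qed
qed

lemma mem_kron_Knnn_K2_V [simp]:
  "((X, j), s) \<in> kron_V (Knnn_V n) K2_V \<longleftrightarrow> X < 3 \<and> j < n \<and> (s = 0 \<or> s = 1)"
  by (auto simp: kron_V_def Knnn_V_def K2_V_def)

text \<open>Summing over the endpoints makes the index difference k - j of an edge
  {((X, j), 0), ((Y, k), 1)} a function of the unordered edge.\<close>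

definition index_shift :: "((nat \<times> nat) \<times> nat) set \<Rightarrow> int" where
  "index_shift e = (\<Sum>v\<in>e. if snd v = 1 then int (snd (fst v)) else - int (snd (fst v)))"

lemma index_shift_edge [simp]: "index_shift {((X, j), 0), ((Y, k), 1)} = int k - int j"
  by (simp add: index_shift_def)

definition edge_part :: "nat \<Rightarrow> ((nat \<times> nat) \<times> nat) set \<Rightarrow> nat" where
  "edge_part n e = nat (index_shift e mod int (Suc n) div 2)"

lemma edge_part_le: "edge_part n e \<le> n div 2"
proof -
  have "index_shift e mod int (Suc n) < int (Suc n)"
    by simp
  then have "index_shift e mod int (Suc n) \<le> int n"
    by linarith
  then show ?thesis
    unfolding edge_part_def by linarith
qed

fun part_layer :: "nat \<Rightarrow> nat \<Rightarrow> (nat \<times> nat) \<times> nat \<Rightarrow> nat" where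
  "part_layer n t ((_, j), s) =
     (if s = 0 then Suc (2 * j) else 2 * nat ((int j - 2 * int t) mod int (Suc n)))"

fun part_angle :: "nat \<Rightarrow> nat \<Rightarrow> (nat \<times> nat) \<times> nat \<Rightarrow> int" where
  "part_angle n t ((X, j), s) = 2 * int X + 3 * int (part_layer n t ((X, j), s))"

lemma part_layer_eqD:
  assumes "part_layer n t ((X, j), s) = part_layer n t ((X', j'), s')"
    and "s = 0 \<or> s = 1" "s' = 0 \<or> s' = 1" "j < n" "j' < n"
  shows "j = j' \<and> s = s'"
proof -
  have "odd (part_layer n t ((Z, i), r)) \<longleftrightarrow> r = 0" for Z i r
    by simp
  then have "s = s'"
    using assms(1-3) by metis
  moreover have "j = j'" if "s = 1"
  proof -
    have "(int j - 2 * int t) mod int (Suc n) = (int j' - 2 * int t) mod int (Suc n)"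
      using assms(1) that \<open>s = s'\<close> by (simp add: eq_nat_nat_iff)
    then have "(int j - 2 * int t + 2 * int t) mod int (Suc n)
        = (int j' - 2 * int t + 2 * int t) mod int (Suc n)"
      by (rule mod_add_cong) simp
    with assms(4,5) show "j = j'"
      by simp
  qed
  ultimately show ?thesis
    using assms(1-3) by auto
qed

lemma two_mul_add_mod_6_inj:
  fixes X X' :: nat
  assumes "X < 3" "X' < 3" "(2 * int X + c) mod 6 = (2 * int X' + c) mod 6"
  shows "X = X'"
proof -
  have "6 dvd (2 * int X + c) - (2 * int X' + c)"
    using assms(3) by (simp only: mod_eq_dvd_iff)
  then have "6 dvd 2 * (int X - int X')"
    by (simp add: algebra_simps)
  moreover have "X \<in> {0, 1, 2}" "X' \<in> {0, 1, 2}"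
    using assms(1,2) by auto
  ultimately show ?thesis
    by auto
qed

lemma part_angle_diff:
  "part_angle n t ((Y, k), s') - part_angle n t ((X, j), s)
     = 2 * (int Y - int X) + 3 * (int (part_layer n t ((Y, k), s')) - int (part_layer n t ((X, j), s)))"
  unfolding part_angle.simps by (simp add: algebra_simps del: part_layer.simps)

lemma part_angle_step:
  assumes "X < 3" "Y < 3" "X \<noteq> Y"
    and "part_layer n t ((Y, k), s') = Suc (part_layer n t ((X, j), s))"
  shows "(part_angle n t ((Y, k), s') - part_angle n t ((X, j), s)) mod 6 \<in> {1, 5}"
proof -
  have "X \<in> {0, 1, 2}" "Y \<in> {0, 1, 2}"
    using assms(1,2) by auto
  with assms(3) have "(2 * (int Y - int X) + 3) mod 6 \<in> {1, 5}"
    by auto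
  then show ?thesis
    unfolding part_angle_diff assms(4) by simp
qed

lemma inj_on_part_layer_angle:
  "inj_on (\<lambda>v. (part_layer n t v, part_angle n t v mod 6)) (kron_V (Knnn_V n) K2_V)"
proof (rule inj_onI)
  fix u v
  assume u: "u \<in> kron_V (Knnn_V n) K2_V" and v: "v \<in> kron_V (Knnn_V n) K2_V"
    and eq: "(part_layer n t u, part_angle n t u mod 6) = (part_layer n t v, part_angle n t v mod 6)"
  obtain X j s X' j' s' where uv: "u = ((X, j), s)" "v = ((X', j'), s')"
    by (metis prod.collapse)
  from eq have lay: "part_layer n t u = part_layer n t v"
    and ang: "part_angle n t u mod 6 = part_angle n t v mod 6"
    by simp_all
  have "j = j' \<and> s = s'"
    using part_layer_eqD[OF lay[unfolded uv]] u v uv by simp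
  moreover have "(2 * int X + 3 * int (part_layer n t u)) mod 6
      = (2 * int X' + 3 * int (part_layer n t u)) mod 6"
    using ang lay unfolding uv by (simp only: part_angle.simps)
  then have "X = X'"
    using two_mul_add_mod_6_inj u v uv by simp
  ultimately show "u = v"
    using uv by simp
qed

lemma part_edge_layered:
  assumes "e \<in> kron_E (Knnn_E n) K2_E" "edge_part n e = t"
  shows "\<exists>u v. e = {u, v} \<and> u \<in> kron_V (Knnn_V n) K2_V \<and> v \<in> kron_V (Knnn_V n) K2_V
      \<and> part_layer n t v = Suc (part_layer n t u)
      \<and> (part_angle n t v - part_angle n t u) mod 6 \<in> {1, 5}"
proof -
  obtain X Y j k where XY: "X < 3" "Y < 3" "X \<noteq> Y" and jk: "j < n" "k < n"
    and e: "e = {((X, j), 0), ((Y, k), 1)}"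
    using assms(1) by (rule kron_Knnn_K2_edgeE)
  define N where "N = int (Suc n)"
  define r where "r = (int k - int j) mod N - 2 * int t"
  have "index_shift e = int k - int j"
    unfolding e by (rule index_shift_edge)
  with assms(2) have "nat ((int k - int j) mod N div 2) = t"
    by (simp add: edge_part_def N_def)
  moreover have "0 \<le> (int k - int j) mod N"
    by (simp add: N_def)
  ultimately have r: "r = 0 \<or> r = 1"
    unfolding r_def by linarith
  have "(int k - 2 * int t) mod N = ((int k - int j) mod N + (int j - 2 * int t)) mod N"
    by (simp add: mod_add_left_eq)
  also have "\<dots> = (int j + r) mod N"
    by (simp add: r_def algebra_simps)
  also have "\<dots> = int j + r"
    using jk r by (auto simp: N_def)
  finally have lay_Y: "part_layer n t ((Y, k), 1) = 2 * j + 2 * nat r"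
    using r by (auto simp: N_def)
  have lay_X: "part_layer n t ((X, j), 0) = Suc (2 * j)"
    by simp
  have V: "((X, j), 0) \<in> kron_V (Knnn_V n) K2_V" "((Y, k), 1) \<in> kron_V (Knnn_V n) K2_V"
    using XY jk by simp_all
  from r show ?thesis
  proof
    assume "r = 0"
    then have "part_layer n t ((X, j), 0) = Suc (part_layer n t ((Y, k), 1))"
      using lay_X lay_Y by simp
    moreover have "e = {((Y, k), 1), ((X, j), 0)}"
      using e by (simp add: insert_commute)
    ultimately show ?thesis
      using V part_angle_step[OF XY(2,1) XY(3)[symmetric]] by blast
  next
    assume "r = 1"
    then have "part_layer n t ((Y, k), 1) = Suc (part_layer n t ((X, j), 0))"
      using lay_X lay_Y by simp
    then show ?thesis
      using V e part_angle_step[OF XY] by blast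
  qed
qed

lemma planar_edge_part:
  "planar (kron_V (Knnn_V n) K2_V) {e \<in> kron_E (Knnn_E n) K2_E. edge_part n e = t}"
proof (rule concentric_layering.planar)
  show "concentric_layering (kron_V (Knnn_V n) K2_V) {e \<in> kron_E (Knnn_E n) K2_E. edge_part n e = t}
      (part_layer n t) (part_angle n t)"
  proof
    show "inj_on (\<lambda>v. (part_layer n t v, part_angle n t v mod 6)) (kron_V (Knnn_V n) K2_V)"
      by (rule inj_on_part_layer_angle)
  next
    fix u v assume lay: "part_layer n t u = part_layer n t v"
    obtain X j s X' j' s' where uv: "u = ((X, j), s)" "v = ((X', j'), s')"
      by (metis prod.collapse)
    show "even (part_angle n t u - part_angle n t v)"
      using lay unfolding uv part_angle_diff by simp
  next
    fix e assume "e \<in> {e \<in> kron_E (Knnn_E n) K2_E. edge_part n e = t}"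
    then show "\<exists>u v. e = {u, v} \<and> u \<in> kron_V (Knnn_V n) K2_V \<and> v \<in> kron_V (Knnn_V n) K2_V
        \<and> part_layer n t v = Suc (part_layer n t u)
        \<and> (part_angle n t v - part_angle n t u) mod 6 \<in> {1, 5}"
      using part_edge_layered by blast
  qed
qed

lemma planar_partition_kron_Knnn_K2:
  "planar_partition (kron_V (Knnn_V n) K2_V) (kron_E (Knnn_E n) K2_E) (n div 2 + 1)"
  unfolding planar_partition_def
proof (intro exI conjI ballI allI impI)
  fix e
  show "edge_part n e < n div 2 + 1"
    using edge_part_le[of n e] by simp
next
  fix t
  show "planar (kron_V (Knnn_V n) K2_V) {e \<in> kron_E (Knnn_E n) K2_E. edge_part n e = t}"
    by (rule planar_edge_part)
qed

theorem lemma4p5: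
  fixes p :: nat
  shows "planar_partition (kron_V (Knnn_V (4*p+3)) K2_V) (kron_E (Knnn_E (4*p+3)) K2_E) (2*p+2)
       \<and> thickness (kron_V (Knnn_V (4*p+3)) K2_V) (kron_E (Knnn_E (4*p+3)) K2_E) \<le> 2*p+2"
proof -
  have "(4 * p + 3) div 2 + 1 = 2 * p + 2"
    by simp
  then have partition:
    "planar_partition (kron_V (Knnn_V (4*p+3)) K2_V) (kron_E (Knnn_E (4*p+3)) K2_E) (2*p+2)"
    using planar_partition_kron_Knnn_K2[of "4 * p + 3"] by simp
  then have "thickness (kron_V (Knnn_V (4*p+3)) K2_V) (kron_E (Knnn_E (4*p+3)) K2_E) \<le> 2*p+2"
    unfolding thickness_def by (rule Least_le)
  with partition show ?thesis ..
qed

end
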